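(* Let $E\subseteq\mathbb{R}$ and let $(f_n)$ be a sequence of functions $E\to\mathbb{R}$, each Abel continuous on $E$, such that $(f_n)$ converges uniformly on $E$ to a function $f:E\to\mathbb{R}$. Then $f$ is Abel continuous on $E$.
   Context: A sequence $(p_n)_{n\ge0}$ is Abel convergent to $\ell$ if $\sum_{k=0}^{\infty}p_k x^k$ converges for every $0\le x<1$ and $\lim_{x\to 1^-}(1-x)\sum_{k=0}^{\infty}p_k x^k=\ell$. A function $g:E\to\mathbb{R}$ is Abel continuous on $E$ if for every sequence $(p_n)$ in $E$ Abel convergent to some $\ell\in E$, $(g(p_n))$ is Abel convergent to $g(\ell)$. *)

theory Defs
  imports "HOL-Analysis.Analysis"
begin

definition abel_convergent :: "(nat \<Rightarrow> real) \<Rightarrow> real \<Rightarrow> bool" where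
  "abel_convergent p l \<longleftrightarrow>
     (\<forall>x. 0 \<le> x \<and> x < 1 \<longrightarrow> summable (\<lambda>k. p k * x ^ k)) \<and>
     ((\<lambda>x. (1 - x) * (\<Sum>k. p k * x ^ k)) \<longlongrightarrow> l) (at_left 1)"

definition abel_continuous_on :: "real set \<Rightarrow> (real \<Rightarrow> real) \<Rightarrow> bool" where
  "abel_continuous_on E g \<longleftrightarrow>
     (\<forall>p l. (\<forall>n. p n \<in> E) \<longrightarrow> l \<in> E \<longrightarrow> abel_convergent p l \<longrightarrow>
        abel_convergent (\<lambda>n. g (p n)) (g l))"

end

theory Submission
  imports Defs
begin

text \<open>A function that is a uniform limit of Abel continuous functions is Abel continuous because
  Abel convergence is stable under uniform perturbation: if \<open>|p\<^sub>k - q\<^sub>k| \<le> \<epsilon>\<close> for all \<open>k\<close>,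
  then the Abel means \<open>(1 - x) \<Sum> p\<^sub>k x\<^sup>k\<close> and \<open>(1 - x) \<Sum> q\<^sub>k x\<^sup>k\<close> differ by at most \<open>\<epsilon>\<close>,
  since \<open>(1 - x) \<Sum> x\<^sup>k = 1\<close>. An \<open>\<epsilon>/3\<close>-argument then passes the limit through.\<close>

lemma bounded_power_series:
  fixes d :: "nat \<Rightarrow> real"
  assumes bound: "\<And>k. \<bar>d k\<bar> \<le> B" and x: "0 \<le> x" "x < 1"
  shows "summable (\<lambda>k. d k * x ^ k)" and "\<bar>(1 - x) * (\<Sum>k. d k * x ^ k)\<bar> \<le> B"
proof -
  have geom: "summable (\<lambda>k. B * x ^ k)"
    using x by (intro summable_mult summable_geometric) auto
  have term_le: "\<And>k. norm (d k * x ^ k) \<le> B * x ^ k"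
    using bound x by (simp add: abs_mult mult_right_mono)
  have norm_summable: "summable (\<lambda>k. norm (d k * x ^ k))"
    by (rule summable_comparison_test[OF _ geom]) (use term_le in auto)
  then show "summable (\<lambda>k. d k * x ^ k)"
    by (rule summable_norm_cancel)
  have "\<bar>\<Sum>k. d k * x ^ k\<bar> \<le> (\<Sum>k. norm (d k * x ^ k))"
    using summable_norm[OF norm_summable] by simp
  also have "\<dots> \<le> (\<Sum>k. B * x ^ k)"
    by (rule suminf_le[OF term_le norm_summable geom])
  also have "\<dots> = B / (1 - x)"
    using x by (simp add: suminf_mult suminf_geometric)
  finally have "\<bar>\<Sum>k. d k * x ^ k\<bar> \<le> B / (1 - x)" .
  then show "\<bar>(1 - x) * (\<Sum>k. d k * x ^ k)\<bar> \<le> B"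
    using x by (simp add: abs_mult pos_le_divide_eq mult.commute)
qed

lemma abel_mean_perturb:
  fixes p q :: "nat \<Rightarrow> real"
  assumes q: "summable (\<lambda>k. q k * x ^ k)" and close: "\<And>k. \<bar>p k - q k\<bar> \<le> B"
    and x: "0 \<le> x" "x < 1"
  shows "summable (\<lambda>k. p k * x ^ k)"
    and "\<bar>(1 - x) * (\<Sum>k. p k * x ^ k) - (1 - x) * (\<Sum>k. q k * x ^ k)\<bar> \<le> B"
proof -
  have diff: "summable (\<lambda>k. (p k - q k) * x ^ k)"
    using bounded_power_series(1)[OF close x] .
  have "summable (\<lambda>k. q k * x ^ k + (p k - q k) * x ^ k)"
    using summable_add[OF q diff] .
  then show "summable (\<lambda>k. p k * x ^ k)"
    by (simp add: algebra_simps)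
  have "(\<Sum>k. p k * x ^ k) - (\<Sum>k. q k * x ^ k) = (\<Sum>k. (p k - q k) * x ^ k)"
    using suminf_diff[OF \<open>summable (\<lambda>k. p k * x ^ k)\<close> q] by (simp add: algebra_simps)
  then show "\<bar>(1 - x) * (\<Sum>k. p k * x ^ k) - (1 - x) * (\<Sum>k. q k * x ^ k)\<bar> \<le> B"
    using bounded_power_series(2)[OF close x] by (simp add: right_diff_distrib[symmetric])
qed

lemma abel_convergent_uniform_approx:
  fixes p :: "nat \<Rightarrow> real"
  assumes approx: "\<And>e. e > 0 \<Longrightarrow>
    \<exists>q m. abel_convergent q m \<and> (\<forall>k. \<bar>p k - q k\<bar> \<le> e) \<and> \<bar>l - m\<bar> \<le> e"
  shows "abel_convergent p l"
  unfolding abel_convergent_def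
proof (intro conjI allI impI)
  fix x :: real
  assume "0 \<le> x \<and> x < 1"
  moreover obtain q m where "abel_convergent q m" "\<forall>k. \<bar>p k - q k\<bar> \<le> 1"
    using approx[of 1] by auto
  ultimately show "summable (\<lambda>k. p k * x ^ k)"
    by (intro abel_mean_perturb(1)[of q x p 1]) (auto simp: abel_convergent_def)
next
  show "((\<lambda>x. (1 - x) * (\<Sum>k. p k * x ^ k)) \<longlongrightarrow> l) (at_left 1)"
    unfolding tendsto_iff
  proof (intro allI impI)
    fix e :: real
    assume "e > 0"
    then obtain q m where q: "abel_convergent q m"
      and close: "\<forall>k. \<bar>p k - q k\<bar> \<le> e / 3" and lm: "\<bar>l - m\<bar> \<le> e / 3"
      using approx[of "e / 3"] by auto
    have "\<forall>\<^sub>F x in at_left 1. dist ((1 - x) * (\<Sum>k. q k * x ^ k)) m < e / 3"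
      using q \<open>e > 0\<close> unfolding abel_convergent_def tendsto_iff
      by (meson divide_pos_pos zero_less_numeral)
    moreover have "\<forall>\<^sub>F x in at_left (1::real). 0 \<le> x \<and> x < 1"
      using eventually_at_left_real[of 0 1] by (auto elim: eventually_mono)
    ultimately show "\<forall>\<^sub>F x in at_left 1. dist ((1 - x) * (\<Sum>k. p k * x ^ k)) l < e"
    proof eventually_elim
      case (elim x)
      then have "\<bar>(1 - x) * (\<Sum>k. p k * x ^ k) - (1 - x) * (\<Sum>k. q k * x ^ k)\<bar> \<le> e / 3"
        using q close by (intro abel_mean_perturb(2)) (auto simp: abel_convergent_def)
      then show ?case
        using elim lm unfolding dist_real_def by linarith
    qed
  qed
qed

theorem theorem8:
  fixes E :: "real set" and fs :: "nat \<Rightarrow> real \<Rightarrow> real" and f :: "real \<Rightarrow> real"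
  assumes "\<And>n. abel_continuous_on E (fs n)"
    and "uniform_limit E fs f sequentially"
  shows "abel_continuous_on E f"
  unfolding abel_continuous_on_def
proof (intro allI impI)
  fix p l
  assume pE: "\<forall>n. p n \<in> E" and lE: "l \<in> E" and pl: "abel_convergent p l"
  show "abel_convergent (\<lambda>n. f (p n)) (f l)"
  proof (rule abel_convergent_uniform_approx)
    fix e :: real
    assume "e > 0"
    then obtain N where N: "\<forall>y\<in>E. \<bar>fs N y - f y\<bar> < e"
      using assms(2) unfolding uniform_limit_iff eventually_sequentially dist_real_def
      by blast
    have "abel_convergent (\<lambda>n. fs N (p n)) (fs N l)"
      using assms(1) pE lE pl unfolding abel_continuous_on_def by blast
    with N pE lE show "\<exists>q m. abel_convergent q m \<and> (\<forall>k. \<bar>f (p k) - q k\<bar> \<le> e) \<and> \<bar>f l - m\<bar> \<le> e"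
      by (metis abs_minus_commute less_imp_le)
  qed
qed

end
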